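(* On the Heisenberg group $H=\langle a,b,c\mid ac=ca,\ bc=cb,\ [a,b]=c\rangle$ there exist length functions $l$ which are not stable norms, i.e. there is no function $L:H\to[0,\infty)$ with $L(gh)\leq L(g)+L(h)$ and $L(g)=L(g^{-1})$ for all $g,h$ such that $l(g)=\lim_{k\to\infty}L(g^{k})/k$ for all $g\in H$.
   Context: A length function on a group $G$ is a function $l:G\to[0,\infty)$ such that $l(g^{n})=|n|\,l(g)$ for all $g\in G,n\in\mathbb{Z}$; $l(hgh^{-1})=l(g)$ for all $g,h$; and $l(ab)\leq l(a)+l(b)$ whenever $a,b$ commute. *)

theory Defs
  imports "HOL-Algebra.Group" "HOL-Analysis.Analysis"
begin

text \<open>Here a = (1,0,0), b = (0,1,0),
  c = (0,0,1) satisfy ac = ca, bc = cb and the commutator of a and b is central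
  generating the centre; this is the standard model of the presented group.\<close>

definition heis_mult :: "int \<times> int \<times> int \<Rightarrow> int \<times> int \<times> int \<Rightarrow> int \<times> int \<times> int" where
  "heis_mult p q = (case p of (x,y,z) \<Rightarrow> case q of (x',y',z') \<Rightarrow> (x + x', y + y', z + z' + x * y'))"

definition heis :: "(int \<times> int \<times> int) monoid" where
  "heis = \<lparr>carrier = UNIV, monoid.mult = heis_mult, monoid.one = (0,0,0)\<rparr>"

definition length_function :: "('a, 'b) monoid_scheme \<Rightarrow> ('a \<Rightarrow> real) \<Rightarrow> bool" where
  "length_function G l \<longleftrightarrow>
     (\<forall>g\<in>carrier G. l g \<ge> 0) \<and>
     (\<forall>g\<in>carrier G. \<forall>n::int. l (g [^]\<^bsub>G\<^esub> n) = \<bar>real_of_int n\<bar> * l g) \<and>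
     (\<forall>g\<in>carrier G. \<forall>h\<in>carrier G. l (h \<otimes>\<^bsub>G\<^esub> g \<otimes>\<^bsub>G\<^esub> inv\<^bsub>G\<^esub> h) = l g) \<and>
     (\<forall>a\<in>carrier G. \<forall>b\<in>carrier G. a \<otimes>\<^bsub>G\<^esub> b = b \<otimes>\<^bsub>G\<^esub> a \<longrightarrow>
        l (a \<otimes>\<^bsub>G\<^esub> b) \<le> l a + l b)"

definition stable_norm :: "('a, 'b) monoid_scheme \<Rightarrow> ('a \<Rightarrow> real) \<Rightarrow> bool" where
  "stable_norm G l \<longleftrightarrow>
     (\<exists>L :: 'a \<Rightarrow> real.
        (\<forall>g\<in>carrier G. L g \<ge> 0) \<and>
        (\<forall>g\<in>carrier G. \<forall>h\<in>carrier G. L (g \<otimes>\<^bsub>G\<^esub> h) \<le> L g + L h) \<and>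
        (\<forall>g\<in>carrier G. L g = L (inv\<^bsub>G\<^esub> g)) \<and>
        (\<forall>g\<in>carrier G. (\<lambda>k::nat. L (g [^]\<^bsub>G\<^esub> k) / real k) \<longlonglongrightarrow> l g))"

end

theory Submission
  imports Defs
begin

text \<open>The function l(x, y, z) = |x| for x = y and l(x, y, z) = 0 otherwise is a length
  function: if g and h commute and gh lies on the diagonal x = y, then either g and h both
  lie on it or gh has x = 0.  It vanishes on a = (1,0,0) and b = (0,1,0), while
  l(ab) = l(1,1,1) = 1.  If l were the stabilisation of a symmetric subadditive L, then
  L(a^k) and L(b^k) would be o(k); but
  (ab)^(2j) = a^(2j) b^(4j-1) a^j b^(-(2j-1)) a^(-j),
  so subadditivity would force L((ab)^(2j)) = o(j), contradicting l(ab) = 1.\<close>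

lemma heis_carrier [simp]: "carrier heis = UNIV"
  by (simp add: heis_def)

lemma heis_one [simp]: "\<one>\<^bsub>heis\<^esub> = (0, 0, 0)"
  by (simp add: heis_def)

lemma heis_mult_triple [simp]:
  "(x, y, z) \<otimes>\<^bsub>heis\<^esub> (x', y', z') = (x + x', y + y', z + z' + x * y')"
  by (simp add: heis_def heis_mult_def)

lemma group_heis: "group heis"
proof (rule groupI)
  fix g h k :: "int \<times> int \<times> int"
  show "g \<otimes>\<^bsub>heis\<^esub> h \<otimes>\<^bsub>heis\<^esub> k = g \<otimes>\<^bsub>heis\<^esub> (h \<otimes>\<^bsub>heis\<^esub> k)"
    by (cases g; cases h; cases k) (simp add: algebra_simps)
next
  fix g :: "int \<times> int \<times> int"
  show "\<one>\<^bsub>heis\<^esub> \<otimes>\<^bsub>heis\<^esub> g = g"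
    by (cases g) simp
  obtain x y z where g: "g = (x, y, z)"
    by (cases g)
  show "\<exists>h\<in>carrier heis. h \<otimes>\<^bsub>heis\<^esub> g = \<one>\<^bsub>heis\<^esub>"
    by (rule bexI[of _ "(-x, -y, -z + x * y)"]) (simp_all add: g)
qed (simp_all add: heis_def)

lemma heis_inv_triple [simp]: "inv\<^bsub>heis\<^esub> (x, y, z) = (-x, -y, -z + x * y)"
  by (rule group.inv_equality[OF group_heis]) simp_all

lemma heis_commute_iff:
  "(x, y, z) \<otimes>\<^bsub>heis\<^esub> (x', y', z') = (x', y', z') \<otimes>\<^bsub>heis\<^esub> (x, y, z) \<longleftrightarrow> x * y' = x' * y"
  by (auto simp: algebra_simps)

lemma heis_nat_pow:
  "(x, y, z) [^]\<^bsub>heis\<^esub> (k::nat) =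
     (int k * x, int k * y, int k * z + x * y * (int k * (int k - 1) div 2))"
proof (induction k)
  case (Suc k)
  have "int (Suc k) * (int (Suc k) - 1) div 2 = int k * (int k - 1) div 2 + int k"
    by (simp add: algebra_simps)
  then show ?case
    using Suc by (simp only:) (simp add: algebra_simps)
qed simp

lemma heis_int_pow:
  "\<exists>w. (x, y, z) [^]\<^bsub>heis\<^esub> (n::int) = (n * x, n * y, w)"
proof (cases n rule: int_cases)
  case (nonneg k)
  then show ?thesis
    by (simp add: int_pow_int heis_nat_pow)
next
  case (neg k)
  then have "(x, y, z) [^]\<^bsub>heis\<^esub> n = inv\<^bsub>heis\<^esub> ((x, y, z) [^]\<^bsub>heis\<^esub> Suc k)"
    using group.int_pow_neg_int[OF group_heis, of "(x, y, z)" "Suc k"] by simp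
  also have "\<dots> = (n * x, n * y, snd (snd (inv\<^bsub>heis\<^esub> ((x, y, z) [^]\<^bsub>heis\<^esub> Suc k))))"
    by (simp add: neg heis_nat_pow algebra_simps)
  finally show ?thesis
    by blast
qed

definition diagonal_length :: "int \<times> int \<times> int \<Rightarrow> real" where
  "diagonal_length g = (case g of (x, y, _) \<Rightarrow> if x = y then \<bar>real_of_int x\<bar> else 0)"

lemma diagonal_length_triple [simp]:
  "diagonal_length (x, y, z) = (if x = y then \<bar>real_of_int x\<bar> else 0)"
  by (simp add: diagonal_length_def)

lemma diagonal_length_commuting_subadditive:
  assumes "x * y' = x' * y"
  shows "diagonal_length ((x, y, z) \<otimes>\<^bsub>heis\<^esub> (x', y', z'))
           \<le> diagonal_length (x, y, z) + diagonal_length (x', y', z')"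
proof -
  have "x + x' = 0" if "x \<noteq> y" "x + x' = y + y'"
  proof -
    from that(2) have "y' = x + x' - y"
      by simp
    with assms have "(x + x') * (x - y) = 0"
      by (simp add: algebra_simps)
    with that(1) show ?thesis
      by simp
  qed
  then show ?thesis
    by auto
qed

lemma length_function_diagonal_length: "length_function heis diagonal_length"
  unfolding length_function_def
proof (intro conjI ballI allI impI)
  fix g :: "int \<times> int \<times> int" and n :: int
  obtain x y z where g: "g = (x, y, z)"
    by (cases g)
  obtain w where "g [^]\<^bsub>heis\<^esub> n = (n * x, n * y, w)"
    using heis_int_pow g by blast
  then show "diagonal_length (g [^]\<^bsub>heis\<^esub> n) = \<bar>real_of_int n\<bar> * diagonal_length g"
    by (simp add: g abs_mult)
next
  fix g h :: "int \<times> int \<times> int"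
  show "diagonal_length (h \<otimes>\<^bsub>heis\<^esub> g \<otimes>\<^bsub>heis\<^esub> inv\<^bsub>heis\<^esub> h) = diagonal_length g"
    by (cases g; cases h) simp
next
  fix g h :: "int \<times> int \<times> int"
  assume "g \<otimes>\<^bsub>heis\<^esub> h = h \<otimes>\<^bsub>heis\<^esub> g"
  then show "diagonal_length (g \<otimes>\<^bsub>heis\<^esub> h) \<le> diagonal_length g + diagonal_length h"
    by (cases g; cases h) (simp only: heis_commute_iff diagonal_length_commuting_subadditive)
qed (simp add: diagonal_length_def split: prod.split)

lemma eventually_le_linear_of_LIMSEQ:
  assumes "(\<lambda>k. f k / real k) \<longlonglongrightarrow> c" "c < e"
  shows "\<forall>\<^sub>F k in sequentially. f k \<le> e * real k"
  using order_tendstoD(2)[OF assms] eventually_gt_at_top[of 0]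
  by eventually_elim (simp add: pos_divide_less_eq)

lemma eventually_ge_linear_of_LIMSEQ:
  assumes "(\<lambda>k. f k / real k) \<longlonglongrightarrow> c" "e < c"
  shows "\<forall>\<^sub>F k in sequentially. e * real k \<le> f k"
  using order_tendstoD(1)[OF assms] eventually_gt_at_top[of 0]
  by eventually_elim (simp add: pos_less_divide_eq)

lemma heis_diagonal_pow_factorisation:
  fixes j :: nat
  assumes "1 \<le> j"
  shows "(1, 1, 1) [^]\<^bsub>heis\<^esub> (2 * j) =
    (1, 0, 0) [^]\<^bsub>heis\<^esub> (2 * j) \<otimes>\<^bsub>heis\<^esub> (0, 1, 0) [^]\<^bsub>heis\<^esub> (4 * j - 1)
      \<otimes>\<^bsub>heis\<^esub> (1, 0, 0) [^]\<^bsub>heis\<^esub> j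
      \<otimes>\<^bsub>heis\<^esub> inv\<^bsub>heis\<^esub> ((0, 1, 0) [^]\<^bsub>heis\<^esub> (2 * j - 1))
      \<otimes>\<^bsub>heis\<^esub> inv\<^bsub>heis\<^esub> ((1, 0, 0) [^]\<^bsub>heis\<^esub> j)"
proof -
  have "2 * int j * (2 * int j - 1) div 2 = int j * (2 * int j - 1)"
    by simp
  then show ?thesis
    using assms by (simp add: heis_nat_pow of_nat_diff algebra_simps)
qed

lemma heis_diagonal_pow_le:
  fixes L :: "int \<times> int \<times> int \<Rightarrow> real"
  assumes sub: "\<And>g h. L (g \<otimes>\<^bsub>heis\<^esub> h) \<le> L g + L h"
    and sym: "\<And>g. L (inv\<^bsub>heis\<^esub> g) = L g"
    and "0 \<le> \<epsilon>"
    and a: "\<And>k. N \<le> k \<Longrightarrow> L ((1, 0, 0) [^]\<^bsub>heis\<^esub> k) \<le> \<epsilon> * real k"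
    and b: "\<And>k. N \<le> k \<Longrightarrow> L ((0, 1, 0) [^]\<^bsub>heis\<^esub> k) \<le> \<epsilon> * real k"
    and "N \<le> j" "1 \<le> j"
  shows "L ((1, 1, 1) [^]\<^bsub>heis\<^esub> (2 * j)) \<le> 10 * \<epsilon> * real j"
proof -
  have sub5: "L (g\<^sub>1 \<otimes>\<^bsub>heis\<^esub> g\<^sub>2 \<otimes>\<^bsub>heis\<^esub> g\<^sub>3 \<otimes>\<^bsub>heis\<^esub> g\<^sub>4 \<otimes>\<^bsub>heis\<^esub> g\<^sub>5)
      \<le> L g\<^sub>1 + L g\<^sub>2 + L g\<^sub>3 + L g\<^sub>4 + L g\<^sub>5" for g\<^sub>1 g\<^sub>2 g\<^sub>3 g\<^sub>4 g\<^sub>5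
    using sub[of "g\<^sub>1 \<otimes>\<^bsub>heis\<^esub> g\<^sub>2 \<otimes>\<^bsub>heis\<^esub> g\<^sub>3 \<otimes>\<^bsub>heis\<^esub> g\<^sub>4" g\<^sub>5]
      sub[of "g\<^sub>1 \<otimes>\<^bsub>heis\<^esub> g\<^sub>2 \<otimes>\<^bsub>heis\<^esub> g\<^sub>3" g\<^sub>4]
      sub[of "g\<^sub>1 \<otimes>\<^bsub>heis\<^esub> g\<^sub>2" g\<^sub>3] sub[of g\<^sub>1 g\<^sub>2]
    by linarith
  have "L ((1, 1, 1) [^]\<^bsub>heis\<^esub> (2 * j))
      \<le> L ((1, 0, 0) [^]\<^bsub>heis\<^esub> (2 * j)) + L ((0, 1, 0) [^]\<^bsub>heis\<^esub> (4 * j - 1))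
        + L ((1, 0, 0) [^]\<^bsub>heis\<^esub> j) + L ((0, 1, 0) [^]\<^bsub>heis\<^esub> (2 * j - 1))
        + L ((1, 0, 0) [^]\<^bsub>heis\<^esub> j)"
    using sub5[of "(1, 0, 0) [^]\<^bsub>heis\<^esub> (2 * j)" "(0, 1, 0) [^]\<^bsub>heis\<^esub> (4 * j - 1)"
        "(1, 0, 0) [^]\<^bsub>heis\<^esub> j" "inv\<^bsub>heis\<^esub> ((0, 1, 0) [^]\<^bsub>heis\<^esub> (2 * j - 1))"
        "inv\<^bsub>heis\<^esub> ((1, 0, 0) [^]\<^bsub>heis\<^esub> j)"]
    by (simp only: heis_diagonal_pow_factorisation[OF \<open>1 \<le> j\<close>] sym)
  also have "\<dots> \<le> \<epsilon> * real (2 * j) + \<epsilon> * real (4 * j - 1) + \<epsilon> * real j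
      + \<epsilon> * real (2 * j - 1) + \<epsilon> * real j"
    using assms by (intro add_mono a b) auto
  also have "\<dots> \<le> 10 * \<epsilon> * real j"
    using assms by (simp add: of_nat_diff algebra_simps)
  finally show ?thesis .
qed

lemma not_stable_norm_diagonal_length: "\<not> stable_norm heis diagonal_length"
proof
  assume "stable_norm heis diagonal_length"
  then obtain L :: "int \<times> int \<times> int \<Rightarrow> real"
    where sub: "\<And>g h. L (g \<otimes>\<^bsub>heis\<^esub> h) \<le> L g + L h"
      and sym: "\<And>g. L (inv\<^bsub>heis\<^esub> g) = L g"
      and lim: "\<And>g. (\<lambda>k. L (g [^]\<^bsub>heis\<^esub> k) / real k) \<longlonglongrightarrow> diagonal_length g"
    unfolding stable_norm_def by (metis UNIV_I heis_carrier)
  have "\<forall>\<^sub>F k in sequentially.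
      L ((1, 0, 0) [^]\<^bsub>heis\<^esub> k) \<le> 1 / 20 * real k \<and>
      L ((0, 1, 0) [^]\<^bsub>heis\<^esub> k) \<le> 1 / 20 * real k \<and>
      1 / 2 * real k \<le> L ((1, 1, 1) [^]\<^bsub>heis\<^esub> k)"
    using lim[of "(1, 0, 0)"] lim[of "(0, 1, 0)"] lim[of "(1, 1, 1)"]
    by (intro eventually_conj eventually_le_linear_of_LIMSEQ eventually_ge_linear_of_LIMSEQ) auto
  then obtain N where N: "\<And>k. N \<le> k \<Longrightarrow>
      L ((1, 0, 0) [^]\<^bsub>heis\<^esub> k) \<le> 1 / 20 * real k \<and>
      L ((0, 1, 0) [^]\<^bsub>heis\<^esub> k) \<le> 1 / 20 * real k \<and>
      1 / 2 * real k \<le> L ((1, 1, 1) [^]\<^bsub>heis\<^esub> k)"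
    unfolding eventually_sequentially by blast
  define j where "j = Suc N"
  have "L ((1, 1, 1) [^]\<^bsub>heis\<^esub> (2 * j)) \<le> 10 * (1 / 20) * real j"
    by (rule heis_diagonal_pow_le[OF sub sym]) (use N in \<open>auto simp: j_def\<close>)
  moreover have "1 / 2 * real (2 * j) \<le> L ((1, 1, 1) [^]\<^bsub>heis\<^esub> (2 * j))"
    using N[of "2 * j"] by (simp add: j_def)
  ultimately show False
    by (simp add: j_def)
qed

theorem corollary25:
  shows "\<exists>l. length_function heis l \<and> \<not> stable_norm heis l"
  using length_function_diagonal_length not_stable_norm_diagonal_length by blast

end
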